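(* Let $X$ be a Hausdorff hereditarily disconnected space and $p\in X$ be such that $X-\{p\}$ is totally disconnected. Then $\mathcal{K}(X)$ is hereditarily disconnected.
   Context: $\mathcal{K}(X)$ is the set of nonempty compact subsets of $X$ with the Vietoris topology (generated by $U^+=\{A: A\subset U\}$ and $U^-=\{A: A\cap U\neq\emptyset\}$ for $U$ open in $X$). A space is hereditarily disconnected if every nonempty connected subset is a singleton; it is totally disconnected if any two distinct points can be separated by a clopen set (containing one but not the other). *)

theory Defs
  imports "HOL-Analysis.Analysis"
begin

definition vietoris :: "'a topology \<Rightarrow> 'a set topology" where
  "vietoris X = subtopology
     (topology_generated_by
        ({{A. A \<subseteq> U} | U. openin X U} \<union> {{A. A \<inter> U \<noteq> {}} | U. openin X U}))
     {A. A \<noteq> {} \<and> compactin X A}"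

definition hereditarily_disconnected_space :: "'a topology \<Rightarrow> bool" where
  "hereditarily_disconnected_space X \<longleftrightarrow>
     (\<forall>S. S \<subseteq> topspace X \<and> S \<noteq> {} \<and> connectedin X S \<longrightarrow> (\<exists>x. S = {x}))"

definition totally_disconnected_space :: "'a topology \<Rightarrow> bool" where
  "totally_disconnected_space X \<longleftrightarrow>
     (\<forall>x \<in> topspace X. \<forall>y \<in> topspace X. x \<noteq> y \<longrightarrow>
        (\<exists>C. openin X C \<and> closedin X C \<and> x \<in> C \<and> y \<notin> C))"

end

theory Submission
  imports Defs
begin

text \<open>Let \<open>\<K>\<close> be a connected family of compacta and \<open>W\<close> the part of \<open>\<Union>\<K>\<close> in the closure
of \<open>\<Union>\<K> - \<Inter>\<K>\<close>. If \<open>W\<close> had a nonempty clopen piece \<open>Q\<close> missing \<open>p\<close>, pick \<open>y \<in> Q\<close> lying in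
some member but not in another member \<open>K\<^sub>2\<close>, and separate the compact set \<open>K\<^sub>2 \<inter> Q\<close> from \<open>y\<close>
by a clopen subset \<open>C\<close> of \<open>X - {p}\<close>. The condition \<open>K \<inter> Q \<subseteq> C\<close> can be written both as an
upper and as a lower Vietoris condition on \<open>K \<in> \<K>\<close>, so it is clopen on \<open>\<K>\<close>; it holds for
\<open>K\<^sub>2\<close> but not for a member containing \<open>y\<close>. By hereditary disconnectedness \<open>W \<subseteq> {p}\<close>, so
every member is \<open>\<Inter>\<K>\<close> or \<open>insert p (\<Inter>\<K>)\<close>, and whether a member contains \<open>p\<close> is again
a clopen condition.\<close>

lemma topspace_vietoris: "topspace (vietoris X) = {A. A \<noteq> {} \<and> compactin X A}"
  unfolding vietoris_def by (auto intro!: exI[of _ "topspace X"] dest: compactin_subset_topspace)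

lemma openin_vietoris_upper:
  assumes "openin X U"
  shows "openin (vietoris X) {A \<in> topspace (vietoris X). A \<subseteq> U}"
proof -
  have "{A \<in> topspace (vietoris X). A \<subseteq> U} = {A. A \<subseteq> U} \<inter> {A. A \<noteq> {} \<and> compactin X A}"
    by (auto simp: topspace_vietoris)
  then show ?thesis
    unfolding vietoris_def by (auto intro!: openin_subtopology_Int topology_generated_by_Basis assms)
qed

lemma openin_vietoris_lower:
  assumes "openin X U"
  shows "openin (vietoris X) {A \<in> topspace (vietoris X). A \<inter> U \<noteq> {}}"
proof -
  have "{A \<in> topspace (vietoris X). A \<inter> U \<noteq> {}} = {A. A \<inter> U \<noteq> {}} \<inter> {A. A \<noteq> {} \<and> compactin X A}"
    by (auto simp: topspace_vietoris)
  then show ?thesis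
    unfolding vietoris_def by (auto intro!: openin_subtopology_Int topology_generated_by_Basis assms)
qed

lemma connectedin_vietoris_compactin:
  "\<lbrakk>connectedin (vietoris X) \<K>; K \<in> \<K>\<rbrakk> \<Longrightarrow> compactin X K"
  using connectedin_subset_topspace by (fastforce simp: topspace_vietoris)

lemma connectedin_vietoris_upper_all_or_none:
  assumes \<K>: "connectedin (vietoris X) \<K>" and "openin X U" "openin X V"
    and upper_iff_lower: "\<And>K. K \<in> \<K> \<Longrightarrow> K \<subseteq> U \<longleftrightarrow> K \<inter> V = {}"
  shows "(\<forall>K\<in>\<K>. K \<subseteq> U) \<or> (\<forall>K\<in>\<K>. \<not> K \<subseteq> U)"
proof -
  define E1 where "E1 = {A \<in> topspace (vietoris X). A \<subseteq> U}"
  define E2 where "E2 = {A \<in> topspace (vietoris X). A \<inter> V \<noteq> {}}"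
  have K_E: "K \<in> E1 \<longleftrightarrow> K \<subseteq> U" "K \<in> E2 \<longleftrightarrow> \<not> K \<subseteq> U" if "K \<in> \<K>" for K
    using that connectedin_subset_topspace[OF \<K>] upper_iff_lower[OF that]
    unfolding E1_def E2_def by blast+
  have "openin (vietoris X) E1"
    unfolding E1_def using assms(2) by (rule openin_vietoris_upper)
  moreover have "openin (vietoris X) E2"
    unfolding E2_def using assms(3) by (rule openin_vietoris_lower)
  moreover have "\<K> \<subseteq> E1 \<union> E2" "E1 \<inter> E2 \<inter> \<K> = {}"
    using K_E by blast+
  ultimately have "E1 \<inter> \<K> = {} \<or> E2 \<inter> \<K> = {}"
    using \<K> unfolding connectedin by blast
  then show ?thesis
    using K_E by blast
qed

lemma totally_disconnected_space_separate_compactin: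
  assumes td: "totally_disconnected_space X" and L: "compactin X L"
    and y: "y \<in> topspace X" "y \<notin> L"
  shows "\<exists>C. openin X C \<and> closedin X C \<and> L \<subseteq> C \<and> y \<notin> C"
proof -
  have "\<exists>C. openin X C \<and> closedin X C \<and> z \<in> C \<and> y \<notin> C" if "z \<in> L" for z
  proof -
    have "z \<in> topspace X" "z \<noteq> y"
      using that y compactin_subset_topspace[OF L] by auto
    with y(1) show ?thesis
      using td unfolding totally_disconnected_space_def by blast
  qed
  then obtain C where C: "\<And>z. z \<in> L \<Longrightarrow> openin X (C z) \<and> closedin X (C z) \<and> z \<in> C z \<and> y \<notin> C z"
    by metis
  then have "\<exists>\<F>. finite \<F> \<and> \<F> \<subseteq> C ` L \<and> L \<subseteq> \<Union>\<F>"
    by (intro compactinD[OF L]) auto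
  then obtain \<F> where \<F>: "finite \<F>" "\<F> \<subseteq> C ` L" "L \<subseteq> \<Union>\<F>"
    by blast
  have "openin X (\<Union>\<F>)" "closedin X (\<Union>\<F>)" "y \<notin> \<Union>\<F>"
    using C \<F>(2) by (blast intro: openin_Union closedin_Union[OF \<F>(1)])+
  with \<F>(3) show ?thesis
    by blast
qed

lemma totally_disconnected_open_subspace_separate_compactin:
  assumes td: "totally_disconnected_space (subtopology X Y)" and Y: "openin X Y"
    and L: "compactin X L" "L \<subseteq> Y" and y: "y \<in> Y" "y \<notin> L"
  shows "\<exists>C. openin X C \<and> openin X (Y - C) \<and> L \<subseteq> C \<and> y \<notin> C"
proof -
  have top: "topspace (subtopology X Y) = Y"
    using openin_subset[OF Y] by (rule topspace_subtopology_subset)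
  obtain C where C: "openin (subtopology X Y) C" "closedin (subtopology X Y) C" "L \<subseteq> C" "y \<notin> C"
    using totally_disconnected_space_separate_compactin[OF td] L y top
    by (metis compactin_subtopology)
  have "openin X C" "openin X (Y - C)"
    using C(1,2) Y top by (metis openin_trans_full openin_diff openin_topspace)+
  with C(3,4) show ?thesis
    by blast
qed

lemma hereditarily_disconnected_clopen_avoiding:
  assumes "hereditarily_disconnected_space X" "W \<subseteq> topspace X" "\<not> W \<subseteq> {p}"
  shows "\<exists>Q. openin (subtopology X W) Q \<and> closedin (subtopology X W) Q \<and> Q \<noteq> {} \<and> p \<notin> Q"
proof (cases "connectedin X W")
  case True
  then obtain w where "W = {w}"
    using assms unfolding hereditarily_disconnected_space_def by blast
  then show ?thesis
    using assms(2,3) by (auto simp: openin_subtopology_refl)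
next
  case False
  have top: "topspace (subtopology X W) = W"
    using assms(2) by (rule topspace_subtopology_subset)
  with False obtain T where T: "openin (subtopology X W) T" "closedin (subtopology X W) T" "T \<noteq> {}" "T \<noteq> W"
    using assms(2) unfolding connectedin_def connected_space_clopen_in by auto
  show ?thesis
  proof (cases "p \<in> T")
    case True
    have "openin (subtopology X W) (W - T)" "closedin (subtopology X W) (W - T)"
      using T top by (metis openin_diff openin_topspace, metis closedin_diff closedin_topspace)
    moreover have "W - T \<noteq> {}"
      using T top openin_subset by blast
    ultimately show ?thesis
      using True by blast
  next
    case False
    then show ?thesis
      using T by blast
  qed
qed

lemma connectedin_vietoris_trace_subset:
  assumes X: "Hausdorff_space X" and \<K>: "connectedin (vietoris X) \<K>"
    and G: "openin X G" and F: "closedin X F"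
    and trace: "\<Union>\<K> \<inter> X closure_of (\<Union>\<K> - \<Inter>\<K>) \<inter> G = \<Union>\<K> \<inter> F"
    and C: "openin X C" and D: "openin X D" and CD: "\<Union>\<K> \<inter> F \<subseteq> C \<union> D" "C \<inter> D = {}"
    and K2: "K2 \<in> \<K>" "K2 \<inter> F \<subseteq> C" and K: "K \<in> \<K>"
  shows "K \<inter> F \<subseteq> C"
proof -
  define B where "B = X closure_of (\<Union>\<K> - \<Inter>\<K>)"
  define R where "R = X closure_of (\<Union>\<K> - B)"
  define U where "U = (topspace X - F) \<union> C"
  define V where "V = G \<inter> D - R"
  \<comment> \<open>\<open>\<Union>\<K> - B\<close> lies in every member, so \<open>V\<close> must avoid its closure \<open>R\<close>; no point of
    \<open>F \<inter> D\<close> is lost since \<open>R \<subseteq> K2\<close> and \<open>K2 \<inter> F \<subseteq> C\<close>.\<close>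
  have top: "\<Union>\<K> \<subseteq> topspace X"
    using connectedin_vietoris_compactin[OF \<K>] compactin_subset_topspace by blast
  have "\<Union>\<K> - \<Inter>\<K> \<subseteq> B"
    unfolding B_def using top by (intro closure_of_subset) blast
  then have "\<Union>\<K> - B \<subseteq> K2"
    using K2(1) by blast
  then have R_K2: "R \<subseteq> K2"
    unfolding R_def
    using closure_of_minimal compactin_imp_closedin[OF X connectedin_vietoris_compactin[OF \<K> K2(1)]]
    by blast
  have R: "\<Union>\<K> - B \<subseteq> R"
    unfolding R_def using top by (intro closure_of_subset) blast
  have "openin X U"
    unfolding U_def using F C by (simp add: openin_Un openin_diff)
  moreover have "openin X V"
    unfolding V_def R_def using G D by (simp add: openin_diff openin_Int)
  moreover have "L \<subseteq> U \<longleftrightarrow> L \<inter> V = {}" if L: "L \<in> \<K>" for L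
  proof -
    have "L \<subseteq> U \<longleftrightarrow> L \<inter> F \<inter> D = {}"
      using L top CD unfolding U_def by blast
    moreover have "L \<inter> F \<inter> D = L \<inter> V"
      using L trace[folded B_def] R R_K2 K2(2) CD(2) unfolding V_def by blast
    ultimately show ?thesis
      by simp
  qed
  ultimately have "(\<forall>L\<in>\<K>. L \<subseteq> U) \<or> (\<forall>L\<in>\<K>. \<not> L \<subseteq> U)"
    by (rule connectedin_vietoris_upper_all_or_none[OF \<K>])
  moreover have "K2 \<subseteq> U"
    using K2 top unfolding U_def by blast
  ultimately show ?thesis
    using K K2(1) unfolding U_def by blast
qed

lemma connectedin_vietoris_clopen_avoiding_empty:
  assumes X: "Hausdorff_space X"
    and td: "totally_disconnected_space (subtopology X (topspace X - {p}))"
    and \<K>: "connectedin (vietoris X) \<K>"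
    and Q_open: "openin (subtopology X (\<Union>\<K> \<inter> X closure_of (\<Union>\<K> - \<Inter>\<K>))) Q"
    and Q_closed: "closedin (subtopology X (\<Union>\<K> \<inter> X closure_of (\<Union>\<K> - \<Inter>\<K>))) Q"
    and p: "p \<notin> Q"
  shows "Q = {}"
proof (rule ccontr)
  define B where "B = X closure_of (\<Union>\<K> - \<Inter>\<K>)"
  define Y where "Y = topspace X - {p}"
  assume "Q \<noteq> {}"
  have top: "\<Union>\<K> \<subseteq> topspace X"
    using connectedin_vietoris_compactin[OF \<K>] compactin_subset_topspace by blast
  obtain G where G: "openin X G" "Q = \<Union>\<K> \<inter> B \<inter> G"
    using Q_open unfolding openin_subtopology B_def by blast
  obtain F where F: "closedin X F" "Q = \<Union>\<K> \<inter> F"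
  proof -
    obtain F0 where "closedin X F0" "Q = F0 \<inter> (\<Union>\<K> \<inter> B)"
      using Q_closed unfolding closedin_subtopology B_def by blast
    moreover have "closedin X B"
      unfolding B_def by simp
    ultimately show ?thesis
      using that[of "F0 \<inter> B"] by blast
  qed
  obtain y where y: "y \<in> Q" "y \<in> \<Union>\<K> - \<Inter>\<K>"
  proof -
    obtain q where "q \<in> B" "q \<in> G"
      using \<open>Q \<noteq> {}\<close> G(2) by blast
    then obtain y where "y \<in> \<Union>\<K> - \<Inter>\<K>" "y \<in> G"
      using G(1) unfolding B_def in_closure_of by blast
    moreover have "\<Union>\<K> - \<Inter>\<K> \<subseteq> B"
      unfolding B_def using top by (intro closure_of_subset) blast
    ultimately show ?thesis
      using that G(2) by blast
  qed
  then obtain K1 K2 where K1: "K1 \<in> \<K>" "y \<in> K1" and K2: "K2 \<in> \<K>" "y \<notin> K2"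
    by blast
  have Y: "openin X Y"
    unfolding Y_def using Hausdorff_imp_t1_space[OF X]
    by (simp add: t1_space_openin_delete_alt)
  have Q_Y: "Q \<subseteq> Y"
    using p top F(2) unfolding Y_def by blast
  have "compactin X (K2 \<inter> F)" "K2 \<inter> F \<subseteq> Y" "y \<in> Y" "y \<notin> K2 \<inter> F"
    using closed_Int_compactin[OF F(1) connectedin_vietoris_compactin[OF \<K> K2(1)]] K2 F(2) Q_Y y(1)
    by (auto simp: Int_commute)
  then obtain C where C: "openin X C" "openin X (Y - C)" "K2 \<inter> F \<subseteq> C" "y \<notin> C"
    using totally_disconnected_open_subspace_separate_compactin[OF td[folded Y_def] Y] by blast
  have trace: "\<Union>\<K> \<inter> X closure_of (\<Union>\<K> - \<Inter>\<K>) \<inter> G = \<Union>\<K> \<inter> F"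
    using G(2) F(2) unfolding B_def by simp
  have "\<Union>\<K> \<inter> F \<subseteq> C \<union> (Y - C)" "C \<inter> (Y - C) = {}"
    using F(2) Q_Y by blast+
  then have "K1 \<inter> F \<subseteq> C"
    using connectedin_vietoris_trace_subset[OF X \<K> G(1) F(1) trace C(1,2)] K2(1) C(3) K1(1)
    by blast
  then show False
    using y(1) K1(2) F(2) C(4) by blast
qed

lemma connectedin_vietoris_Union_diff_Inter:
  assumes X: "Hausdorff_space X" and hd: "hereditarily_disconnected_space X"
    and td: "totally_disconnected_space (subtopology X (topspace X - {p}))"
    and \<K>: "connectedin (vietoris X) \<K>"
  shows "\<Union>\<K> - \<Inter>\<K> \<subseteq> {p}"
proof (rule ccontr)
  define W where "W = \<Union>\<K> \<inter> X closure_of (\<Union>\<K> - \<Inter>\<K>)"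
  assume "\<not> \<Union>\<K> - \<Inter>\<K> \<subseteq> {p}"
  moreover have top: "\<Union>\<K> \<subseteq> topspace X"
    using connectedin_vietoris_compactin[OF \<K>] compactin_subset_topspace by blast
  moreover have "\<Union>\<K> - \<Inter>\<K> \<subseteq> W"
    unfolding W_def using top closure_of_subset[of "\<Union>\<K> - \<Inter>\<K>" X] by blast
  ultimately obtain Q where "openin (subtopology X W) Q" "closedin (subtopology X W) Q" "Q \<noteq> {}" "p \<notin> Q"
    using hereditarily_disconnected_clopen_avoiding[OF hd, of W p] unfolding W_def by blast
  then show False
    using connectedin_vietoris_clopen_avoiding_empty[OF X td \<K>] unfolding W_def by blast
qed

lemma connectedin_vietoris_singleton:
  assumes X: "Hausdorff_space X" and \<K>: "connectedin (vietoris X) \<K>" "\<K> \<noteq> {}"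
    and diff: "\<Union>\<K> - \<Inter>\<K> \<subseteq> {p}"
  shows "\<exists>K. \<K> = {K}"
proof (cases "p \<in> \<Inter>\<K>")
  case True
  then have "\<Union>\<K> \<subseteq> \<Inter>\<K>"
    using diff by blast
  then show ?thesis
    using \<K>(2) by blast
next
  case False
  have members: "K = \<Inter>\<K> \<or> K = insert p (\<Inter>\<K>)" if "K \<in> \<K>" for K
    using that diff by blast
  have top: "K \<subseteq> topspace X" if "K \<in> \<K>" for K
    using connectedin_vietoris_compactin[OF \<K>(1) that] by (rule compactin_subset_topspace)
  have upper: "K \<subseteq> topspace X - {p} \<longleftrightarrow> K = \<Inter>\<K>" if "K \<in> \<K>" for K
    using members[OF that] top[OF that] False by blast
  have lower: "K \<inter> (topspace X - \<Inter>\<K>) = {} \<longleftrightarrow> K = \<Inter>\<K>" if "K \<in> \<K>" for K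
    using members[OF that] top[OF that] False by blast
  have "closedin X (\<Inter>\<K>)"
    using \<K> compactin_imp_closedin[OF X] connectedin_vietoris_compactin by blast
  then have "(\<forall>K\<in>\<K>. K \<subseteq> topspace X - {p}) \<or> (\<forall>K\<in>\<K>. \<not> K \<subseteq> topspace X - {p})"
    using Hausdorff_imp_t1_space[OF X] upper lower
    by (intro connectedin_vietoris_upper_all_or_none[OF \<K>(1), where V = "topspace X - \<Inter>\<K>"])
       (auto simp: t1_space_openin_delete_alt)
  then have "\<K> \<subseteq> {\<Inter>\<K>} \<or> \<K> \<subseteq> {insert p (\<Inter>\<K>)}"
    using members upper by blast
  then show ?thesis
    using \<K>(2) by blast
qed

theorem proposition5p5:
  fixes X :: "'a topology" and p :: 'a
  assumes "Hausdorff_space X"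
    and "hereditarily_disconnected_space X"
    and "p \<in> topspace X"
    and "totally_disconnected_space (subtopology X (topspace X - {p}))"
  shows "hereditarily_disconnected_space (vietoris X)"
  unfolding hereditarily_disconnected_space_def
proof (intro allI impI)
  fix \<K>
  assume "\<K> \<subseteq> topspace (vietoris X) \<and> \<K> \<noteq> {} \<and> connectedin (vietoris X) \<K>"
  then have "connectedin (vietoris X) \<K>" "\<K> \<noteq> {}"
    by auto
  moreover have "\<Union>\<K> - \<Inter>\<K> \<subseteq> {p}"
    using connectedin_vietoris_Union_diff_Inter[OF assms(1,2,4) \<open>connectedin (vietoris X) \<K>\<close>] .
  ultimately show "\<exists>K. \<K> = {K}"
    using connectedin_vietoris_singleton[OF assms(1)] by blast
qed

end
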